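(* Let $\epsilon\in(0,1/3)$ and let $A\in\mathbb{C}^{\ell\times\ell}$ be a matrix with nonnegative entries such that $A_{0,0}=1-\epsilon$ and $\sum_{i,j}A_{i,j}=1$. Then $A$ has a unique eigenvalue $\mu$ (of algebraic multiplicity one) satisfying $$|\mu-A_{0,0}|\le\frac{\epsilon^2}{1-2\epsilon},$$ and every other eigenvalue $\lambda$ of $A$ satisfies $|\lambda|\le\epsilon$. In particular, $\mu$ is the unique eigenvalue of maximal modulus and $\mu=A_{0,0}+O(\epsilon^2)$.
   Context: Rows and columns of $A$ are indexed by $0,\dots,\ell-1$. *)

theory Defs
  imports "Jordan_Normal_Form.Char_Poly"
begin

end

(* Let a = A(0,0) = 1 - \<epsilon> and let p, q, s be the masses of row 0 without a, of column 0
   without a, and of the remaining block, so p + q + s = \<epsilon>. For an eigenvector v with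
   eigenvalue \<lambda> the tail T = \<Sum>_{i>0} |v_i| satisfies |\<lambda>| T \<le> q |v_0| + s T and
   |\<lambda> - a| |v_0| \<le> p T. If |\<lambda>| > \<epsilon> this forces v_0 \<noteq> 0 and |\<lambda> - a| (|\<lambda>| - s) \<le> p q,
   which gives |\<lambda> - a| \<le> \<epsilon>^2/(1 - 2\<epsilon>). The same estimates for a left eigenvector u of a
   second eigenvalue of modulus > \<epsilon> show that the heads dominate the tails in u \<bullet> v, so
   u \<bullet> v \<noteq> 0; this gives uniqueness, and simplicity because an eigenvector in the image of
   A - \<lambda> is orthogonal to every left eigenvector of \<lambda>. Finally such an eigenvalue exists:
   the spectral radius is at least a = 1 - \<epsilon> > \<epsilon>, as the diagonal entries of the powers of
   a nonnegative matrix grow at least like a^k. *)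

theory Submission
  imports Defs "Jordan_Normal_Form.Spectral_Radius" "Jordan_Normal_Form.Jordan_Normal_Form_Uniqueness"
begin

hide_const (open) Coset.order

lemma kernel_dim_le_1:
  fixes K :: "'a :: field mat"
  assumes K: "K \<in> carrier_mat n n" and v: "v \<in> mat_kernel K"
    and multiples: "\<And>x. x \<in> mat_kernel K \<Longrightarrow> \<exists>c. x = c \<cdot>\<^sub>v v"
  shows "kernel_dim K \<le> 1"
proof -
  interpret KK: kernel n n K by unfold_locales (rule K)
  have "KK.span {v} = mat_kernel K"
  proof
    show "KK.span {v} \<subseteq> mat_kernel K"
      using KK.Ker.span_is_subset2[of "{v}"] v by auto
    have sub: "submodule class_ring (KK.span {v}) KK.VK"
      by (rule KK.Ker.span_is_submodule) (use v in auto)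
    have "v \<in> KK.span {v}" using KK.Ker.in_own_span[of "{v}"] v by auto
    then show "mat_kernel K \<subseteq> KK.span {v}"
      using multiples submodule.smult_closed[OF sub] by fastforce
  qed
  then have "KK.dim \<le> 1" by (intro KK.Ker.dim_le1I) (use v in auto)
  then show ?thesis by simp
qed

lemma sum_list_le_1_if_sum_list_min_2_le_1:
  "\<forall>x\<in>set xs. 0 < (x::nat) \<Longrightarrow> sum_list (map (min 2) xs) \<le> 1 \<Longrightarrow> sum_list xs \<le> 1"
proof (induction xs)
  case (Cons x xs)
  then show ?case by (cases xs) auto
qed simp

text \<open>The order of \<open>\<mu>\<close> is the total size of its Jordan blocks, while the second generalized
  eigenspace counts every block with weight \<open>min 2 size\<close>.\<close>

lemma order_char_poly_le_1:
  fixes A :: "complex mat"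
  assumes A: "A \<in> carrier_mat n n" and dim: "dim_gen_eigenspace A \<mu> 2 \<le> 1"
  shows "order \<mu> (char_poly A) \<le> 1"
proof -
  obtain n_as where jnf: "jordan_nf A n_as"
    using char_poly_factorized[OF A] jordan_nf_exists[OF A] by blast
  let ?sizes = "map fst (filter (\<lambda>na. snd na = \<mu>) n_as)"
  have "\<forall>k\<in>set ?sizes. 0 < k"
    using jnf unfolding jordan_nf_def by force
  moreover have "[(k, e)\<leftarrow>n_as . e = \<mu>] = filter (\<lambda>na. snd na = \<mu>) n_as"
    by (induction n_as) auto
  then have "sum_list (map (min 2) ?sizes) \<le> 1"
    using dim unfolding dim_gen_eigenspace[OF jnf] by simp
  ultimately show ?thesis
    unfolding jordan_nf_order[OF jnf] by (rule sum_list_le_1_if_sum_list_min_2_le_1)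
qed

lemma eigenvalue_transpose_mat:
  fixes A :: "'a :: field mat"
  assumes A: "A \<in> carrier_mat n n" and "eigenvalue A \<mu>"
  shows "eigenvalue (transpose_mat A) \<mu>"
  using assms eigenvalue_root_char_poly[OF A] eigenvalue_root_char_poly[OF transpose_carrier_mat[THEN iffD2, OF A]]
  by simp

lemma smult_mat_mult_vec:
  fixes A :: "'a :: comm_ring_1 mat"
  assumes "A \<in> carrier_mat n n" and "v \<in> carrier_vec n"
  shows "(c \<cdot>\<^sub>m A) *\<^sub>v v = c \<cdot>\<^sub>v (A *\<^sub>v v)"
  using assms by (intro eq_vecI) (auto simp: scalar_prod_def sum_distrib_left ac_simps)

lemma char_matrix_mult_vec_eq_0_iff:
  fixes A :: "'a :: field mat"
  assumes A: "A \<in> carrier_mat n n" and v: "v \<in> carrier_vec n"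
  shows "char_matrix A \<mu> *\<^sub>v v = 0\<^sub>v n \<longleftrightarrow> A *\<^sub>v v = \<mu> \<cdot>\<^sub>v v"
proof (cases "v = 0\<^sub>v n")
  case True
  have C: "char_matrix A \<mu> \<in> carrier_mat n n" using A by simp
  then show ?thesis using A True carrier_matD[OF C] by (auto intro!: eq_vecI)
qed (use A v eigenvector_char_matrix[OF A, of v \<mu>] in \<open>auto simp: eigenvector_def\<close>)

lemma eigenvalue_smult_mat:
  fixes A :: "'a :: field mat"
  assumes A: "A \<in> carrier_mat n n" and c: "c \<noteq> 0" and ev: "eigenvalue (c \<cdot>\<^sub>m A) \<mu>"
  shows "eigenvalue A (\<mu> / c)"
proof -
  obtain v where v: "v \<in> carrier_vec n" "v \<noteq> 0\<^sub>v n" and e: "(c \<cdot>\<^sub>m A) *\<^sub>v v = \<mu> \<cdot>\<^sub>v v"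
    using ev A unfolding eigenvalue_def eigenvector_def by auto
  have "c \<cdot>\<^sub>v (A *\<^sub>v v) = c \<cdot>\<^sub>v ((\<mu> / c) \<cdot>\<^sub>v v)"
    using e c by (simp add: smult_mat_mult_vec[OF A v(1)] smult_smult_assoc)
  then have "A *\<^sub>v v = (\<mu> / c) \<cdot>\<^sub>v v"
    using c smult_smult_assoc[of "inverse c" c] by (metis one_smult_vec field_class.field_inverse)
  then show ?thesis using A v unfolding eigenvalue_def eigenvector_def by auto
qed

lemma spectral_radius_smult_mat_le:
  assumes A: "A \<in> carrier_mat n n" and n: "0 < n" and c: "c \<noteq> 0"
  shows "spectral_radius (c \<cdot>\<^sub>m A) \<le> cmod c * spectral_radius A"
proof -
  have cA: "c \<cdot>\<^sub>m A \<in> carrier_mat n n" using A by simp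
  obtain \<mu> where \<mu>: "eigenvalue (c \<cdot>\<^sub>m A) \<mu>" and r: "spectral_radius (c \<cdot>\<^sub>m A) = cmod \<mu>"
    using spectral_radius_mem_max(1)[OF cA n] unfolding spectrum_def by auto
  have "cmod (\<mu> / c) \<le> spectral_radius A"
    using eigenvalue_smult_mat[OF A c \<mu>] spectral_radius_mem_max(2)[OF A n]
    unfolding spectrum_def by auto
  then show ?thesis using c by (simp add: r norm_divide field_simps)
qed

locale nonneg_square =
  fixes A :: "complex mat" and n :: nat
  assumes carrier: "A \<in> carrier_mat n n" and pos: "0 < n"
    and nonneg: "\<forall>i<n. \<forall>j<n. A $$ (i,j) \<in> \<real> \<and> 0 \<le> Re (A $$ (i,j))"
begin

lemma cmod_entry: "i < n \<Longrightarrow> j < n \<Longrightarrow> cmod (A $$ (i,j)) = Re (A $$ (i,j))"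
  using nonneg by (simp add: complex_is_Real_iff cmod_eq_Re)

lemma Re_entry_nonneg: "i < n \<Longrightarrow> j < n \<Longrightarrow> 0 \<le> Re (A $$ (i,j))"
  using nonneg by blast

lemma nonneg_square_transpose: "nonneg_square (transpose_mat A) n"
  using carrier pos nonneg by unfold_locales auto

lemma nonneg_square_mult:
  assumes "nonneg_square B n"
  shows "nonneg_square (A * B) n"
    and "i < n \<Longrightarrow> Re (A $$ (i,i)) * Re (B $$ (i,i)) \<le> Re ((A * B) $$ (i,i))"
proof -
  interpret B: nonneg_square B n by fact
  have entry: "(A * B) $$ (i,j) = (\<Sum>k<n. A $$ (i,k) * B $$ (k,j))" if "i < n" "j < n" for i j
    using that carrier B.carrier by (simp add: scalar_prod_def lessThan_atLeast0)
  have real: "A $$ (i,k) * B $$ (k,j) \<in> \<real>" "0 \<le> Re (A $$ (i,k) * B $$ (k,j))"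
      "Re (A $$ (i,k) * B $$ (k,j)) = Re (A $$ (i,k)) * Re (B $$ (k,j))"
    if "i < n" "j < n" "k < n" for i j k
    using that nonneg B.nonneg by (auto simp: complex_is_Real_iff)
  show "nonneg_square (A * B) n"
  proof unfold_locales
    show "\<forall>i<n. \<forall>j<n. (A * B) $$ (i,j) \<in> \<real> \<and> 0 \<le> Re ((A * B) $$ (i,j))"
      using real(1,2) by (auto simp only: entry Re_sum intro!: sum_in_Reals sum_nonneg)
  qed (use carrier B.carrier pos in auto)
  assume i: "i < n"
  have "Re (A $$ (i,i)) * Re (B $$ (i,i)) \<le> (\<Sum>k<n. Re (A $$ (i,k)) * Re (B $$ (k,i)))"
    using i Re_entry_nonneg B.Re_entry_nonneg
    by (intro member_le_sum[of i "{..<n}" "\<lambda>k. Re (A $$ (i,k)) * Re (B $$ (k,i))"]) auto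
  also have "\<dots> = Re ((A * B) $$ (i,i))"
    unfolding entry[OF i i] Re_sum by (intro sum.cong refl real(3)[symmetric]) (use i in auto)
  finally show "Re (A $$ (i,i)) * Re (B $$ (i,i)) \<le> Re ((A * B) $$ (i,i))" .
qed

lemma nonneg_square_pow:
  shows "nonneg_square (A ^\<^sub>m k) n"
    and "i < n \<Longrightarrow> Re (A $$ (i,i)) ^ k \<le> Re ((A ^\<^sub>m k) $$ (i,i))"
proof (induction k)
  case 0
  show "nonneg_square (A ^\<^sub>m 0) n" using carrier pos by unfold_locales auto
  show "i < n \<Longrightarrow> Re (A $$ (i,i)) ^ 0 \<le> Re ((A ^\<^sub>m 0) $$ (i,i))" using carrier by simp
next
  case (Suc k)
  interpret P: nonneg_square "A ^\<^sub>m k" n by (fact Suc.IH(1))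
  show "nonneg_square (A ^\<^sub>m Suc k) n" using P.nonneg_square_mult(1)[OF nonneg_square_axioms] by simp
  assume i: "i < n"
  have "Re (A $$ (i,i)) ^ Suc k \<le> Re ((A ^\<^sub>m k) $$ (i,i)) * Re (A $$ (i,i))"
    unfolding power_Suc2 by (rule mult_right_mono[OF Suc.IH(2)[OF i] Re_entry_nonneg[OF i i]])
  also have "\<dots> \<le> Re ((A ^\<^sub>m Suc k) $$ (i,i))"
    using P.nonneg_square_mult(2)[OF nonneg_square_axioms i] by simp
  finally show "Re (A $$ (i,i)) ^ Suc k \<le> Re ((A ^\<^sub>m Suc k) $$ (i,i))" .
qed

text \<open>Otherwise a positive rescaling of \<open>A\<close> has spectral radius below 1, hence bounded powers,
  although the \<open>(i,i)\<close> entries of its powers grow geometrically.\<close>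

lemma diag_le_spectral_radius:
  assumes i: "i < n"
  shows "Re (A $$ (i,i)) \<le> spectral_radius A"
proof (rule ccontr)
  define a where "a = Re (A $$ (i,i))"
  assume "\<not> a \<le> spectral_radius A"
  then have lt: "spectral_radius A < a" by simp
  have "0 \<le> spectral_radius A"
    using spectral_radius_mem_max(1)[OF carrier pos] by auto
  define c where "c = 2 / (spectral_radius A + a)"
  have c: "0 < c" using lt \<open>0 \<le> spectral_radius A\<close> by (simp add: c_def)
  interpret C: nonneg_square "complex_of_real c \<cdot>\<^sub>m A" n
    using carrier pos nonneg c by unfold_locales (auto simp: complex_is_Real_iff)
  have "spectral_radius (complex_of_real c \<cdot>\<^sub>m A) \<le> c * spectral_radius A"
    using spectral_radius_smult_mat_le[OF carrier pos, of "complex_of_real c"] c by simp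
  also have "\<dots> < 1" using lt c by (simp add: c_def field_simps)
  finally obtain bound where bound: "\<And>k. norm_bound ((complex_of_real c \<cdot>\<^sub>m A) ^\<^sub>m k) bound"
    using spectral_radius_jnf_norm_bound_less_1_upper_triangular[OF C.carrier] by blast
  have "1 < c * a" using lt \<open>0 \<le> spectral_radius A\<close> by (simp add: c_def field_simps)
  then obtain k where k: "bound < (c * a) ^ k" using real_arch_pow by blast
  have "(c * a) ^ k \<le> Re (((complex_of_real c \<cdot>\<^sub>m A) ^\<^sub>m k) $$ (i,i))"
    using C.nonneg_square_pow(2)[OF i, of k] carrier i by (simp add: a_def)
  also have "\<dots> \<le> cmod (((complex_of_real c \<cdot>\<^sub>m A) ^\<^sub>m k) $$ (i,i))"
    by (rule complex_Re_le_cmod)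
  also have "\<dots> \<le> bound"
    using bound[of k] carrier_matD[OF carrier] i unfolding norm_bound_def by simp
  finally show False using k by simp
qed

definition row_mass :: real where "row_mass = (\<Sum>j\<in>{1..<n}. Re (A $$ (0,j)))"
definition col_mass :: real where "col_mass = (\<Sum>i\<in>{1..<n}. Re (A $$ (i,0)))"
definition block_mass :: real where "block_mass = (\<Sum>i\<in>{1..<n}. \<Sum>j\<in>{1..<n}. Re (A $$ (i,j)))"
definition outer_mass :: real where "outer_mass = row_mass + col_mass + block_mass"
definition tail_norm :: "complex vec \<Rightarrow> real" where "tail_norm v = (\<Sum>i\<in>{1..<n}. cmod (v $ i))"

lemma masses_nonneg: "0 \<le> row_mass" "0 \<le> col_mass" "0 \<le> block_mass"
  unfolding row_mass_def col_mass_def block_mass_def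
  using Re_entry_nonneg pos by (auto intro!: sum_nonneg)

lemma block_mass_le_outer_mass: "block_mass \<le> outer_mass"
  using masses_nonneg unfolding outer_mass_def by linarith

lemma tail_norm_nonneg: "0 \<le> tail_norm v"
  unfolding tail_norm_def by (auto intro!: sum_nonneg)

lemma split_pivot: "{..<n} = insert 0 {1..<n}" "{0..<n} = insert 0 {1..<n}"
  using pos by auto

lemma total_mass: "(\<Sum>i<n. \<Sum>j<n. Re (A $$ (i,j))) = Re (A $$ (0,0)) + outer_mass"
  unfolding outer_mass_def row_mass_def col_mass_def block_mass_def split_pivot
  by (simp add: sum.distrib)

lemma eigenvector_row:
  assumes v: "v \<in> carrier_vec n" and e: "A *\<^sub>v v = \<mu> \<cdot>\<^sub>v v" and i: "i < n"
  shows "\<mu> * v $ i = A $$ (i,0) * v $ 0 + (\<Sum>j\<in>{1..<n}. A $$ (i,j) * v $ j)"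
proof -
  have "(A *\<^sub>v v) $ i = (\<mu> \<cdot>\<^sub>v v) $ i" using e by simp
  then show ?thesis using carrier v i by (simp add: scalar_prod_def split_pivot)
qed

lemma norm_sum_entries:
  "i < n \<Longrightarrow> cmod (\<Sum>j\<in>{1..<n}. A $$ (i,j) * v $ j) \<le> (\<Sum>j\<in>{1..<n}. Re (A $$ (i,j)) * cmod (v $ j))"
  by (rule order.trans[OF norm_sum]) (simp add: norm_mult cmod_entry)

lemma tail_estimate:
  assumes v: "v \<in> carrier_vec n" and e: "A *\<^sub>v v = \<mu> \<cdot>\<^sub>v v"
  shows "cmod \<mu> * tail_norm v \<le> col_mass * cmod (v $ 0) + block_mass * tail_norm v"
proof -
  have row: "cmod \<mu> * cmod (v $ i)
      \<le> Re (A $$ (i,0)) * cmod (v $ 0) + (\<Sum>j\<in>{1..<n}. Re (A $$ (i,j)) * cmod (v $ j))"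
    if "i \<in> {1..<n}" for i
  proof -
    have i: "i < n" using that by simp
    have "cmod \<mu> * cmod (v $ i) = cmod (A $$ (i,0) * v $ 0 + (\<Sum>j\<in>{1..<n}. A $$ (i,j) * v $ j))"
      using eigenvector_row[OF v e i] by (metis norm_mult)
    also have "\<dots> \<le> cmod (A $$ (i,0) * v $ 0) + cmod (\<Sum>j\<in>{1..<n}. A $$ (i,j) * v $ j)"
      by (rule norm_triangle_ineq)
    also have "\<dots> \<le> Re (A $$ (i,0)) * cmod (v $ 0) + (\<Sum>j\<in>{1..<n}. Re (A $$ (i,j)) * cmod (v $ j))"
      using norm_sum_entries[OF i] cmod_entry[OF i pos] by (simp add: norm_mult)
    finally show ?thesis .
  qed
  have col: "(\<Sum>i\<in>{1..<n}. Re (A $$ (i,j))) \<le> block_mass" if j: "j \<in> {1..<n}" for j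
    unfolding block_mass_def
    by (intro sum_mono member_le_sum[OF j]) (use Re_entry_nonneg in auto)
  have "cmod \<mu> * tail_norm v = (\<Sum>i\<in>{1..<n}. cmod \<mu> * cmod (v $ i))"
    by (simp add: tail_norm_def sum_distrib_left)
  also have "\<dots> \<le> (\<Sum>i\<in>{1..<n}. Re (A $$ (i,0)) * cmod (v $ 0)
      + (\<Sum>j\<in>{1..<n}. Re (A $$ (i,j)) * cmod (v $ j)))"
    by (rule sum_mono) (rule row)
  also have "\<dots> = col_mass * cmod (v $ 0)
      + (\<Sum>j\<in>{1..<n}. (\<Sum>i\<in>{1..<n}. Re (A $$ (i,j))) * cmod (v $ j))"
    unfolding col_mass_def by (simp add: sum.distrib sum_distrib_right, rule sum.swap)
  also have "\<dots> \<le> col_mass * cmod (v $ 0) + (\<Sum>j\<in>{1..<n}. block_mass * cmod (v $ j))"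
    by (intro add_left_mono sum_mono mult_right_mono col) auto
  finally show ?thesis by (simp add: tail_norm_def sum_distrib_left)
qed

lemma head_estimate:
  assumes v: "v \<in> carrier_vec n" and e: "A *\<^sub>v v = \<mu> \<cdot>\<^sub>v v"
  shows "cmod (\<mu> - A $$ (0,0)) * cmod (v $ 0) \<le> row_mass * tail_norm v"
proof -
  have "(\<mu> - A $$ (0,0)) * v $ 0 = (\<Sum>j\<in>{1..<n}. A $$ (0,j) * v $ j)"
    using eigenvector_row[OF v e pos] by (simp add: algebra_simps)
  then have "cmod (\<mu> - A $$ (0,0)) * cmod (v $ 0) = cmod (\<Sum>j\<in>{1..<n}. A $$ (0,j) * v $ j)"
    by (metis norm_mult)
  also have "\<dots> \<le> (\<Sum>j\<in>{1..<n}. Re (A $$ (0,j)) * cmod (v $ j))"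
    by (rule norm_sum_entries[OF pos])
  also have "\<dots> \<le> (\<Sum>j\<in>{1..<n}. row_mass * cmod (v $ j))"
    unfolding row_mass_def
    by (intro sum_mono mult_right_mono member_le_sum) (use Re_entry_nonneg pos in auto)
  finally show ?thesis by (simp add: tail_norm_def sum_distrib_left)
qed

lemma left_tail_estimate:
  assumes u: "u \<in> carrier_vec n" and e: "transpose_mat A *\<^sub>v u = \<mu> \<cdot>\<^sub>v u"
  shows "cmod \<mu> * tail_norm u \<le> row_mass * cmod (u $ 0) + block_mass * tail_norm u"
proof -
  interpret T: nonneg_square "transpose_mat A" n by (rule nonneg_square_transpose)
  have "T.col_mass = row_mass"
    unfolding T.col_mass_def row_mass_def using carrier by (intro sum.cong) auto
  moreover have "T.block_mass = block_mass"
    unfolding T.block_mass_def block_mass_def using carrier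
    by (subst sum.swap) (intro sum.cong refl, auto)
  ultimately show ?thesis using T.tail_estimate[OF u e] by (simp add: T.tail_norm_def tail_norm_def)
qed

text \<open>Stated for the common shape of the tail estimates of right and left eigenvectors.\<close>

lemma eq_0_if_head_0:
  assumes v: "v \<in> carrier_vec n" and v0: "v $ 0 = 0" and big: "block_mass < cmod \<mu>"
    and est: "cmod \<mu> * tail_norm v \<le> c * cmod (v $ 0) + block_mass * tail_norm v"
  shows "v = 0\<^sub>v n"
proof -
  have "(cmod \<mu> - block_mass) * tail_norm v \<le> 0" using est v0 by (simp add: algebra_simps)
  then have "tail_norm v = 0" using big tail_norm_nonneg[of v] by (simp add: mult_le_0_iff)
  then have tail: "\<forall>i\<in>{1..<n}. v $ i = 0" unfolding tail_norm_def by (simp add: sum_nonneg_eq_0_iff)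
  show ?thesis
  proof (rule eq_vecI)
    fix i assume "i < dim_vec (0\<^sub>v n)"
    then show "v $ i = 0\<^sub>v n $ i" using tail v0 by (cases "i = 0") auto
  qed (use v in simp)
qed

lemma eigenvector_head_nonzero:
  assumes "v \<in> carrier_vec n" "v \<noteq> 0\<^sub>v n" "A *\<^sub>v v = \<mu> \<cdot>\<^sub>v v" "block_mass < cmod \<mu>"
  shows "v $ 0 \<noteq> 0"
  using eq_0_if_head_0[OF _ _ _ tail_estimate] assms by blast

lemma left_eigenvector_head_nonzero:
  assumes "u \<in> carrier_vec n" "u \<noteq> 0\<^sub>v n" "transpose_mat A *\<^sub>v u = \<mu> \<cdot>\<^sub>v u" "block_mass < cmod \<mu>"
  shows "u $ 0 \<noteq> 0"
  using eq_0_if_head_0[OF _ _ _ left_tail_estimate] assms by blast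

lemma scalar_prod_nonzero_if_head_dominates:
  assumes u: "u \<in> carrier_vec n" and v: "v \<in> carrier_vec n"
    and dom: "tail_norm u * tail_norm v < cmod (u $ 0) * cmod (v $ 0)"
  shows "u \<bullet> v \<noteq> 0"
proof -
  have "cmod (\<Sum>i\<in>{1..<n}. u $ i * v $ i) \<le> (\<Sum>i\<in>{1..<n}. cmod (u $ i) * cmod (v $ i))"
    by (rule order.trans[OF norm_sum]) (simp add: norm_mult)
  also have "\<dots> \<le> (\<Sum>i\<in>{1..<n}. cmod (u $ i) * tail_norm v)"
    unfolding tail_norm_def by (intro sum_mono mult_left_mono member_le_sum) auto
  also have "\<dots> = tail_norm u * tail_norm v" by (simp add: tail_norm_def sum_distrib_right)
  finally have "cmod (\<Sum>i\<in>{1..<n}. u $ i * v $ i) < cmod (u $ 0 * v $ 0)"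
    using dom by (simp add: norm_mult)
  moreover have "u \<bullet> v = u $ 0 * v $ 0 + (\<Sum>i\<in>{1..<n}. u $ i * v $ i)"
    using v unfolding scalar_prod_def by (simp add: split_pivot)
  ultimately show ?thesis
    by (metis add.commute add_diff_cancel_right' diff_0 norm_minus_cancel order_less_irrefl)
qed

text \<open>A right eigenvector for \<open>\<mu>\<close> and a left eigenvector for \<open>\<nu>\<close> are not orthogonal once
  both exceed the outer mass: multiplying the two tail estimates bounds the product of the
  tails by \<open>row_mass * col_mass / ((\<bar>\<mu>\<bar> - s)(\<bar>\<nu>\<bar> - s)) < 1\<close> times the product of the heads.\<close>

lemma left_right_eigenvectors_not_orthogonal:
  assumes v: "v \<in> carrier_vec n" "v \<noteq> 0\<^sub>v n" and ev: "A *\<^sub>v v = \<mu> \<cdot>\<^sub>v v"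
    and u: "u \<in> carrier_vec n" "u \<noteq> 0\<^sub>v n" and eu: "transpose_mat A *\<^sub>v u = \<nu> \<cdot>\<^sub>v u"
    and big: "outer_mass < cmod \<mu>" "outer_mass < cmod \<nu>"
  shows "u \<bullet> v \<noteq> 0"
proof (rule scalar_prod_nonzero_if_head_dominates[OF u(1) v(1)])
  let ?p = row_mass and ?q = col_mass and ?s = block_mass
  have gap: "?p + ?q < cmod \<mu> - ?s" "?p + ?q < cmod \<nu> - ?s"
    using big unfolding outer_mass_def by auto
  have heads: "0 < cmod (v $ 0)" "0 < cmod (u $ 0)"
    using eigenvector_head_nonzero[OF v ev] left_eigenvector_head_nonzero[OF u eu]
      big block_mass_le_outer_mass by auto
  define P where "P = (cmod \<mu> - ?s) * (cmod \<nu> - ?s)"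
  have "?p * ?q \<le> (?p + ?q) * (?p + ?q)" using masses_nonneg by (simp add: algebra_simps)
  also have "\<dots> < P" unfolding P_def using gap masses_nonneg by (intro mult_strict_mono) auto
  finally have pq: "?p * ?q < P" .
  then have P: "0 < P" using masses_nonneg by (meson mult_nonneg_nonneg order_le_less_trans)
  have "P * (tail_norm u * tail_norm v)
      = ((cmod \<nu> - ?s) * tail_norm u) * ((cmod \<mu> - ?s) * tail_norm v)"
    unfolding P_def by (simp add: algebra_simps)
  also have "\<dots> \<le> (?p * cmod (u $ 0)) * (?q * cmod (v $ 0))"
  proof (rule mult_mono)
    show "(cmod \<nu> - ?s) * tail_norm u \<le> ?p * cmod (u $ 0)"
      using left_tail_estimate[OF u(1) eu] by (simp add: algebra_simps)
    show "(cmod \<mu> - ?s) * tail_norm v \<le> ?q * cmod (v $ 0)"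
      using tail_estimate[OF v(1) ev] by (simp add: algebra_simps)
  qed (use gap masses_nonneg tail_norm_nonneg[of v] in auto)
  also have "\<dots> < P * (cmod (u $ 0) * cmod (v $ 0))"
    using pq heads by (simp add: mult.assoc mult.left_commute[of ?q])
  finally show "tail_norm u * tail_norm v < cmod (u $ 0) * cmod (v $ 0)"
    using P by (simp add: mult_less_cancel_left_pos)
qed

lemma dominant_eigenvalue_unique:
  assumes ev: "eigenvalue A \<mu>" "eigenvalue A \<nu>"
    and big: "outer_mass < cmod \<mu>" "outer_mass < cmod \<nu>"
  shows "\<mu> = \<nu>"
proof -
  obtain v where v: "v \<in> carrier_vec n" "v \<noteq> 0\<^sub>v n" and e: "A *\<^sub>v v = \<mu> \<cdot>\<^sub>v v"
    using ev(1) carrier unfolding eigenvalue_def eigenvector_def by auto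
  obtain u where u: "u \<in> carrier_vec n" "u \<noteq> 0\<^sub>v n" and eu: "transpose_mat A *\<^sub>v u = \<nu> \<cdot>\<^sub>v u"
    using eigenvalue_transpose_mat[OF carrier ev(2)] carrier
    unfolding eigenvalue_def eigenvector_def by auto
  have "\<nu> * (u \<bullet> v) = \<mu> * (u \<bullet> v)"
    using transpose_vec_mult_scalar[OF carrier v(1) u(1)] u v unfolding e eu by simp
  then show ?thesis
    using left_right_eigenvectors_not_orthogonal[OF v e u eu big] by simp
qed

lemma dominant_eigenvalue_shift:
  assumes ev: "eigenvalue A \<mu>" and big: "block_mass < cmod \<mu>"
  shows "cmod (\<mu> - A $$ (0,0)) * (cmod \<mu> - block_mass) \<le> row_mass * col_mass"
proof -
  obtain v where v: "v \<in> carrier_vec n" "v \<noteq> 0\<^sub>v n" and e: "A *\<^sub>v v = \<mu> \<cdot>\<^sub>v v"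
    using ev carrier unfolding eigenvalue_def eigenvector_def by auto
  have head: "0 < cmod (v $ 0)" using eigenvector_head_nonzero[OF v e big] by simp
  have tail: "(cmod \<mu> - block_mass) * tail_norm v \<le> col_mass * cmod (v $ 0)"
    using tail_estimate[OF v(1) e] by (simp add: algebra_simps)
  have "cmod (\<mu> - A $$ (0,0)) * (cmod \<mu> - block_mass) * cmod (v $ 0)
      = (cmod (\<mu> - A $$ (0,0)) * cmod (v $ 0)) * (cmod \<mu> - block_mass)"
    by (simp add: ac_simps)
  also have "\<dots> \<le> (row_mass * tail_norm v) * (cmod \<mu> - block_mass)"
    by (rule mult_right_mono[OF head_estimate[OF v(1) e]]) (use big in simp)
  also have "\<dots> = row_mass * ((cmod \<mu> - block_mass) * tail_norm v)"
    by (simp add: ac_simps)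
  also have "\<dots> \<le> row_mass * (col_mass * cmod (v $ 0))"
    by (rule mult_left_mono[OF tail masses_nonneg(1)])
  finally show ?thesis using head by (simp add: mult.assoc[symmetric] mult_le_cancel_right_pos)
qed

lemma dominant_eigenvector_multiple:
  assumes v: "v \<in> carrier_vec n" "v \<noteq> 0\<^sub>v n" and ev: "A *\<^sub>v v = \<mu> \<cdot>\<^sub>v v"
    and x: "x \<in> carrier_vec n" and ex: "A *\<^sub>v x = \<mu> \<cdot>\<^sub>v x" and big: "block_mass < cmod \<mu>"
  shows "x = (x $ 0 / v $ 0) \<cdot>\<^sub>v v"
proof -
  have v0: "v $ 0 \<noteq> 0" by (rule eigenvector_head_nonzero[OF v ev big])
  define w where "w = (v $ 0) \<cdot>\<^sub>v x - (x $ 0) \<cdot>\<^sub>v v"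
  have w: "w \<in> carrier_vec n" unfolding w_def using x v by auto
  have ew: "A *\<^sub>v w = \<mu> \<cdot>\<^sub>v w"
    unfolding w_def using carrier x v ex ev
    by (simp add: mult_minus_distrib_mat_vec mult_mat_vec) (intro eq_vecI, auto simp: algebra_simps)
  have "w = 0\<^sub>v n"
    by (rule eq_0_if_head_0[OF w _ big tail_estimate[OF w ew]]) (use x v pos in \<open>simp add: w_def\<close>)
  have "v $ 0 * x $ i = x $ 0 * v $ i" if "i < n" for i
  proof -
    have "w $ i = 0" using \<open>w = 0\<^sub>v n\<close> that by simp
    then show ?thesis using x v that by (simp add: w_def)
  qed
  then show ?thesis using x v v0 by (intro eq_vecI) (auto simp: field_simps)
qed

text \<open>There is no Jordan chain of length two: the image \<open>y\<close> of such a vector under \<open>A - \<mu>\<close> would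
  be an eigenvector orthogonal to every left eigenvector of \<open>\<mu>\<close>.\<close>

lemma dominant_eigenvalue_no_jordan_chain:
  assumes ev: "eigenvalue A \<mu>" and big: "outer_mass < cmod \<mu>"
    and x: "x \<in> carrier_vec n" and kx: "char_matrix A \<mu> *\<^sub>v (char_matrix A \<mu> *\<^sub>v x) = 0\<^sub>v n"
  shows "A *\<^sub>v x = \<mu> \<cdot>\<^sub>v x"
proof -
  let ?C = "char_matrix A \<mu>"
  have C: "?C \<in> carrier_mat n n" using carrier by simp
  obtain u where u: "u \<in> carrier_vec n" "u \<noteq> 0\<^sub>v n" and eu: "transpose_mat A *\<^sub>v u = \<mu> \<cdot>\<^sub>v u"
    using eigenvalue_transpose_mat[OF carrier ev] carrier
    unfolding eigenvalue_def eigenvector_def by auto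
  have "transpose_mat ?C = char_matrix (transpose_mat A) \<mu>"
    using carrier unfolding char_matrix_def by (intro eq_matI) auto
  then have Cu: "transpose_mat ?C *\<^sub>v u = 0\<^sub>v n"
    using eigenvector_char_matrix[of "transpose_mat A" n u \<mu>] carrier u eu
    by (auto simp: eigenvector_def)
  define y where "y = ?C *\<^sub>v x"
  have y: "y \<in> carrier_vec n" unfolding y_def using C x by auto
  have "u \<bullet> y = (transpose_mat ?C *\<^sub>v u) \<bullet> x"
    unfolding y_def by (rule transpose_vec_mult_scalar[OF C x u(1), symmetric])
  then have "u \<bullet> y = 0" using Cu x by simp
  moreover have "A *\<^sub>v y = \<mu> \<cdot>\<^sub>v y" using char_matrix_mult_vec_eq_0_iff[OF carrier y] kx unfolding y_def by simp
  ultimately have "y = 0\<^sub>v n"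
    using left_right_eigenvectors_not_orthogonal[OF y _ _ u eu big big] by blast
  then show ?thesis using char_matrix_mult_vec_eq_0_iff[OF carrier x] unfolding y_def by simp
qed

lemma dominant_eigenvalue_simple:
  assumes ev: "eigenvalue A \<mu>" and big: "outer_mass < cmod \<mu>"
  shows "order \<mu> (char_poly A) = 1"
proof -
  let ?K = "char_matrix A \<mu> ^\<^sub>m 2"
  have K: "?K \<in> carrier_mat n n" using carrier by simp
  have K_apply: "?K *\<^sub>v x = char_matrix A \<mu> *\<^sub>v (char_matrix A \<mu> *\<^sub>v x)" if "x \<in> carrier_vec n" for x
    using carrier that by (simp add: numeral_2_eq_2 assoc_mult_mat_vec[of _ n n _ n])
  obtain v where v: "v \<in> carrier_vec n" "v \<noteq> 0\<^sub>v n" and e: "A *\<^sub>v v = \<mu> \<cdot>\<^sub>v v"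
    using ev carrier unfolding eigenvalue_def eigenvector_def by auto
  have small: "block_mass < cmod \<mu>" using big block_mass_le_outer_mass by linarith
  have "kernel_dim ?K \<le> 1"
  proof (rule kernel_dim_le_1[OF K])
    have "char_matrix A \<mu> *\<^sub>v v = 0\<^sub>v n"
      using char_matrix_mult_vec_eq_0_iff[OF carrier v(1)] e by simp
    moreover have "char_matrix A \<mu> *\<^sub>v 0\<^sub>v n = 0\<^sub>v n"
      using carrier_matD[of "char_matrix A \<mu>" n n] carrier by (auto intro!: eq_vecI)
    ultimately show "v \<in> mat_kernel ?K"
      by (intro mat_kernelI[OF K v(1)]) (simp add: K_apply[OF v(1)])
    fix x assume "x \<in> mat_kernel ?K"
    then have x: "x \<in> carrier_vec n" and "?K *\<^sub>v x = 0\<^sub>v n" using mat_kernelD[OF K] by auto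
    then have "A *\<^sub>v x = \<mu> \<cdot>\<^sub>v x"
      using dominant_eigenvalue_no_jordan_chain[OF ev big x] K_apply[OF x] by simp
    then show "\<exists>c. x = c \<cdot>\<^sub>v v" using dominant_eigenvector_multiple[OF v e x _ small] by blast
  qed
  then have "order \<mu> (char_poly A) \<le> 1"
    by (intro order_char_poly_le_1[OF carrier]) (simp add: dim_gen_eigenspace_def)
  moreover have "order \<mu> (char_poly A) \<noteq> 0"
    using ev eigenvalue_root_char_poly[OF carrier] degree_monic_char_poly[OF carrier] order_root
    by (metis leading_coeff_0_iff zero_neq_one)
  ultimately show ?thesis by linarith
qed

end

text \<open>The final bound: writing \<open>d = \<bar>\<mu> - a\<^sub>0\<^sub>0\<bar>\<close>, \<open>L = \<bar>\<mu>\<bar>\<close> and \<open>p + q + s = \<epsilon>\<close>, the shift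
  estimate \<open>d (L - s) \<le> p q \<le> (\<epsilon> - s)\<^sup>2/4\<close> first gives \<open>d \<le> \<epsilon>/4\<close> (as \<open>L > \<epsilon>\<close>), then
  \<open>L \<ge> 1 - \<epsilon> - d\<close> gives \<open>d (1 - 9\<epsilon>/4) \<le> \<epsilon>\<^sup>2/4\<close>.\<close>

lemma shift_bound_arith:
  fixes d L p q s \<epsilon> :: real
  assumes nonneg: "0 \<le> p" "0 \<le> q" "0 \<le> s" "0 \<le> d" and sum: "p + q + s = \<epsilon>"
    and big: "\<epsilon> < L" and near: "1 - \<epsilon> - d \<le> L" and \<epsilon>: "\<epsilon> < 1/3"
    and shift: "d * (L - s) \<le> p * q"
  shows "d \<le> \<epsilon>\<^sup>2 / (1 - 2*\<epsilon>)"
proof -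
  have "\<epsilon> - s = p + q" using sum by simp
  then have "4 * (p * q) \<le> (\<epsilon> - s)\<^sup>2"
    using zero_le_power2[of "p - q"] by (simp add: power2_eq_square algebra_simps)
  then have shift': "4 * d * (L - s) \<le> (\<epsilon> - s) * (\<epsilon> - s)"
    using shift by (simp add: power2_eq_square)
  have "(\<epsilon> - s) * (\<epsilon> - s) \<le> (\<epsilon> - s) * (L - s)"
    using nonneg sum big by (intro mult_left_mono) auto
  then have "4 * d \<le> \<epsilon> - s"
    using shift' big nonneg sum by (smt (verit) mult_le_cancel_right_pos mult.commute)
  then have "d * (1 - 9/4 * \<epsilon>) \<le> d * (L - s)"
    using near nonneg sum by (intro mult_left_mono) auto
  also have "\<dots> \<le> \<epsilon>\<^sup>2 / 4"
    using shift' nonneg sum power_mono[of "\<epsilon> - s" \<epsilon> 2] by (simp add: power2_eq_square)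
  moreover have "0 \<le> d * (3 - 7*\<epsilon>)" using nonneg(4) \<epsilon> by simp
  ultimately have "d * (1 - 2*\<epsilon>) \<le> \<epsilon>\<^sup>2" by (simp add: algebra_simps)
  then show ?thesis using \<epsilon> by (simp add: field_simps)
qed

lemma shift_bound_lt:
  fixes \<epsilon> :: real
  assumes "0 < \<epsilon>" "\<epsilon> < 1/3"
  shows "\<epsilon>\<^sup>2 / (1 - 2*\<epsilon>) < 1 - 2*\<epsilon>"
proof -
  have "\<epsilon>\<^sup>2 < (1 - 2*\<epsilon>)\<^sup>2" using assms by (intro power_strict_mono) auto
  then show ?thesis using assms by (simp add: field_simps power2_eq_square)
qed

theorem theorem8:
  fixes A :: "complex mat" and l :: nat and \<epsilon> :: real
  assumes "A \<in> carrier_mat l l"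
    and "0 < l"
    and "0 < \<epsilon>" and "\<epsilon> < 1/3"
    and "\<forall>i<l. \<forall>j<l. A $$ (i,j) \<in> \<real> \<and> 0 \<le> Re (A $$ (i,j))"
    and "A $$ (0,0) = complex_of_real (1 - \<epsilon>)"
    and "(\<Sum>i<l. \<Sum>j<l. A $$ (i,j)) = 1"
  shows "\<exists>\<mu>. eigenvalue A \<mu> \<and> order \<mu> (char_poly A) = 1
          \<and> cmod (\<mu> - A $$ (0,0)) \<le> \<epsilon>\<^sup>2 / (1 - 2*\<epsilon>)
          \<and> (\<forall>x. eigenvalue A x \<and> cmod (x - A $$ (0,0)) \<le> \<epsilon>\<^sup>2 / (1 - 2*\<epsilon>) \<longrightarrow> x = \<mu>)
          \<and> (\<forall>x. eigenvalue A x \<and> x \<noteq> \<mu> \<longrightarrow> cmod x \<le> \<epsilon>)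
          \<and> (\<forall>x. eigenvalue A x \<and> x \<noteq> \<mu> \<longrightarrow> cmod x < cmod \<mu>)"
proof -
  interpret nonneg_square A l using assms(1,2,5) by unfold_locales
  have a00: "cmod (A $$ (0,0)) = 1 - \<epsilon>" "Re (A $$ (0,0)) = 1 - \<epsilon>"
    unfolding assms(6) norm_of_real using assms(4) by auto
  have mass: "outer_mass = \<epsilon>"
    using total_mass arg_cong[OF assms(7), of Re] a00 by (simp add: Re_sum)
  obtain \<mu> where ev: "eigenvalue A \<mu>" and radius: "cmod \<mu> = spectral_radius A"
    using spectral_radius_mem_max(1)[OF carrier pos] unfolding spectrum_def by auto
  have big: "\<epsilon> < cmod \<mu>" using diag_le_spectral_radius[OF pos] a00 radius assms(4) by simp
  have near: "\<epsilon> < cmod x" if "cmod (x - A $$ (0,0)) \<le> \<epsilon>\<^sup>2 / (1 - 2*\<epsilon>)" for x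
    using that shift_bound_lt[OF assms(3,4)] norm_triangle_ineq2[of "A $$ (0,0)" x] a00
    by (simp add: norm_minus_commute)
  have close: "cmod (\<mu> - A $$ (0,0)) \<le> \<epsilon>\<^sup>2 / (1 - 2*\<epsilon>)"
    using shift_bound_arith[OF masses_nonneg norm_ge_zero _ big _ assms(4)
        dominant_eigenvalue_shift[OF ev]] mass block_mass_le_outer_mass big
      norm_triangle_ineq2[of "A $$ (0,0)" \<mu>] a00
    by (simp add: outer_mass_def norm_minus_commute)
  have unique: "x = \<mu>" if "eigenvalue A x" "\<epsilon> < cmod x" for x
    using dominant_eigenvalue_unique[OF that(1) ev] that(2) big mass by simp
  then have small: "cmod x \<le> \<epsilon>" if "eigenvalue A x" "x \<noteq> \<mu>" for x
    using that by force
  show ?thesis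
  proof (intro exI[of _ \<mu>] conjI allI impI)
    show "eigenvalue A \<mu>" by (fact ev)
    show "cmod (\<mu> - A $$ (0,0)) \<le> \<epsilon>\<^sup>2 / (1 - 2*\<epsilon>)" by (fact close)
    show "order \<mu> (char_poly A) = 1" using dominant_eigenvalue_simple[OF ev] big mass by simp
    fix x
    show "x = \<mu>" if "eigenvalue A x \<and> cmod (x - A $$ (0,0)) \<le> \<epsilon>\<^sup>2 / (1 - 2*\<epsilon>)"
      using unique near that by blast
    show "cmod x \<le> \<epsilon>" if "eigenvalue A x \<and> x \<noteq> \<mu>" using small that by blast
    show "cmod x < cmod \<mu>" if "eigenvalue A x \<and> x \<noteq> \<mu>" using small big that by force
  qed
qed

end
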